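(* The class of weakly separable extensions is Morita invariant: if $A/B$ is weakly separable and $A/B$ is Morita equivalent to $A'/B'$, then $A'/B'$ is weakly separable.
   Context: All rings have identity, subrings contain the identity, modules are unital; a ring extension $A/B$ means $B$ is a subring of $A$. A $B$-derivation of $A$ to $A$ is an additive map $D:A\to A$ with $D(xy)=D(x)y+xD(y)$ for all $x,y\in A$ and $D(b)=0$ for all $b\in B$; it is inner if there is $s\in A$ with $D(x)=sx-xs$ for all $x\in A$. $A/B$ is weakly separable if every $B$-derivation of $A$ to $A$ is inner. For bimodules ${}_AX_{A'}$, ${}_AY_{A'}$, write $X\mid Y$ if $X$ is isomorphic to a direct summand of a finite direct sum of copies of $Y$, and $X\sim Y$ if $X\mid Y$ and $Y\mid X$. $\mathrm{End}^r({}_AM)$ denotes the ring of left $A$-endomorphisms of $M$ acting on the right. A bimodule ${}_AM_{A'}$ is a Morita module if ${}_AM\sim{}_AA$ and $\mathrm{End}^r({}_AM)=A'$. Ring extensions $A/B$ and $A'/B'$ are Morita equivalent if there exist Morita modules ${}_AM_{A'}$ and ${}_BN_{B'}$ with ${}_AA\otimes_BN_{B'}\cong{}_AM_{B'}$. A class $\mathscr C$ is Morita invariant if whenever $A/B\in\mathscr C$ and $A/B$ is Morita equivalent to $A'/B'$, then $A'/B'\in\mathscr C$. *)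

theory Defs
  imports Main "HOL-Library.Poly_Mapping"
begin

text \<open>A ring is modelled as a type of class ring_1 (the whole type is the ring).
  A ring extension A/B is a type 'a (the ring A) together with a subring B.\<close>

definition is_subring :: "'a::ring_1 set \<Rightarrow> bool" where
  "is_subring B \<longleftrightarrow> 1 \<in> B \<and> (\<forall>x\<in>B. \<forall>y\<in>B. x + y \<in> B \<and> x - y \<in> B \<and> x * y \<in> B)"

definition is_B_derivation :: "'a::ring_1 set \<Rightarrow> ('a \<Rightarrow> 'a) \<Rightarrow> bool" where
  "is_B_derivation B D \<longleftrightarrow>
     (\<forall>x y. D (x + y) = D x + D y) \<and>
     (\<forall>x y. D (x * y) = D x * y + x * D y) \<and>
     (\<forall>b\<in>B. D b = 0)"

definition is_inner_derivation :: "('a::ring_1 \<Rightarrow> 'a) \<Rightarrow> bool" where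
  "is_inner_derivation D \<longleftrightarrow> (\<exists>s. \<forall>x. D x = s * x - x * s)"

definition weakly_separable :: "'a::ring_1 set \<Rightarrow> bool" where
  "weakly_separable B \<longleftrightarrow> (\<forall>D. is_B_derivation B D \<longrightarrow> is_inner_derivation D)"

definition left_module :: "'r::ring_1 set \<Rightarrow> ('r \<Rightarrow> 'm::ab_group_add \<Rightarrow> 'm) \<Rightarrow> bool" where
  "left_module R act \<longleftrightarrow>
     (\<forall>r\<in>R. \<forall>x y. act r (x + y) = act r x + act r y) \<and>
     (\<forall>r\<in>R. \<forall>s\<in>R. \<forall>x. act (r + s) x = act r x + act s x) \<and>
     (\<forall>r\<in>R. \<forall>s\<in>R. \<forall>x. act (r * s) x = act r (act s x)) \<and>
     (\<forall>x. act 1 x = x)"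

definition right_module :: "'r::ring_1 set \<Rightarrow> ('m::ab_group_add \<Rightarrow> 'r \<Rightarrow> 'm) \<Rightarrow> bool" where
  "right_module R act \<longleftrightarrow>
     (\<forall>r\<in>R. \<forall>x y. act (x + y) r = act x r + act y r) \<and>
     (\<forall>r\<in>R. \<forall>s\<in>R. \<forall>x. act x (r + s) = act x r + act x s) \<and>
     (\<forall>r\<in>R. \<forall>s\<in>R. \<forall>x. act x (r * s) = act (act x r) s) \<and>
     (\<forall>x. act x 1 = x)"

definition bimodule ::
  "'r::ring_1 set \<Rightarrow> 's::ring_1 set \<Rightarrow> ('r \<Rightarrow> 'm::ab_group_add \<Rightarrow> 'm) \<Rightarrow> ('m \<Rightarrow> 's \<Rightarrow> 'm) \<Rightarrow> bool" where
  "bimodule R S la ra \<longleftrightarrow> left_module R la \<and> right_module S ra \<and>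
     (\<forall>r\<in>R. \<forall>s\<in>S. \<forall>x. ra (la r x) s = la r (ra x s))"

definition left_linear ::
  "'r::ring_1 set \<Rightarrow> ('r \<Rightarrow> 'x::ab_group_add \<Rightarrow> 'x) \<Rightarrow> ('r \<Rightarrow> 'y::ab_group_add \<Rightarrow> 'y) \<Rightarrow> ('x \<Rightarrow> 'y) \<Rightarrow> bool" where
  "left_linear R actX actY f \<longleftrightarrow>
     (\<forall>x y. f (x + y) = f x + f y) \<and> (\<forall>r\<in>R. \<forall>x. f (actX r x) = actY r (f x))"

text \<open>The finite direct sum Y^n of a module with carrier CY (a subset of the type 'y),
  realised as the functions nat => 'y with values in CY vanishing outside {..<n},
  with componentwise addition and left action.\<close>

definition dsum_carrier :: "'y::zero set \<Rightarrow> nat \<Rightarrow> (nat \<Rightarrow> 'y) set" where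
  "dsum_carrier CY n = {v. (\<forall>i. v i \<in> CY) \<and> (\<forall>i\<ge>n. v i = 0)}"

definition dsum_act :: "('r \<Rightarrow> 'y \<Rightarrow> 'y) \<Rightarrow> 'r \<Rightarrow> (nat \<Rightarrow> 'y) \<Rightarrow> (nat \<Rightarrow> 'y)" where
  "dsum_act act r v = (\<lambda>i. act r (v i))"

text \<open>X | Y for left R-modules X (carrier CX) and Y (carrier CY): X is isomorphic to a
  direct summand of Y^n for some n, i.e. there are R-linear maps f : X -> Y^n and
  g : Y^n -> X with g o f = id_X.\<close>

definition left_mod_dvd ::
  "'r::ring_1 set \<Rightarrow> 'x::ab_group_add set \<Rightarrow> ('r \<Rightarrow> 'x \<Rightarrow> 'x)
   \<Rightarrow> 'y::ab_group_add set \<Rightarrow> ('r \<Rightarrow> 'y \<Rightarrow> 'y) \<Rightarrow> bool" where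
  "left_mod_dvd R CX actX CY actY \<longleftrightarrow>
     (\<exists>n (f :: 'x \<Rightarrow> nat \<Rightarrow> 'y) (g :: (nat \<Rightarrow> 'y) \<Rightarrow> 'x).
        (\<forall>x\<in>CX. f x \<in> dsum_carrier CY n) \<and>
        (\<forall>v\<in>dsum_carrier CY n. g v \<in> CX) \<and>
        (\<forall>x\<in>CX. \<forall>y\<in>CX. f (x + y) = (\<lambda>i. f x i + f y i)) \<and>
        (\<forall>r\<in>R. \<forall>x\<in>CX. f (actX r x) = dsum_act actY r (f x)) \<and>
        (\<forall>v\<in>dsum_carrier CY n. \<forall>w\<in>dsum_carrier CY n. g (\<lambda>i. v i + w i) = g v + g w) \<and>
        (\<forall>r\<in>R. \<forall>v\<in>dsum_carrier CY n. g (dsum_act actY r v) = actX r (g v)) \<and>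
        (\<forall>x\<in>CX. g (f x) = x))"

definition left_mod_sim ::
  "'r::ring_1 set \<Rightarrow> 'x::ab_group_add set \<Rightarrow> ('r \<Rightarrow> 'x \<Rightarrow> 'x)
   \<Rightarrow> 'y::ab_group_add set \<Rightarrow> ('r \<Rightarrow> 'y \<Rightarrow> 'y) \<Rightarrow> bool" where
  "left_mod_sim R CX actX CY actY \<longleftrightarrow>
     left_mod_dvd R CX actX CY actY \<and> left_mod_dvd R CY actY CX actX"

text \<open>End^r({}_R M) = S: the canonical map S -> End^r({}_R M), s |-> (m |-> m.s), is a
  bijection onto the left R-endomorphisms (it is automatically a ring homomorphism
  for the bimodule structure).\<close>

definition endr_eq ::
  "'r::ring_1 set \<Rightarrow> 's::ring_1 set \<Rightarrow> ('r \<Rightarrow> 'm::ab_group_add \<Rightarrow> 'm) \<Rightarrow> ('m \<Rightarrow> 's \<Rightarrow> 'm) \<Rightarrow> bool" where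
  "endr_eq R S la ra \<longleftrightarrow>
     (\<forall>\<phi>. left_linear R la la \<phi> \<longrightarrow> (\<exists>!s. s \<in> S \<and> (\<forall>m. \<phi> m = ra m s)))"

text \<open>Morita module {}_R M_S (M with carrier the whole type; {}_R R is the ring R,
  i.e. the subset R of the ambient ring type, acting on itself by multiplication).\<close>

definition morita_module ::
  "'r::ring_1 set \<Rightarrow> 's::ring_1 set \<Rightarrow> ('r \<Rightarrow> 'm::ab_group_add \<Rightarrow> 'm) \<Rightarrow> ('m \<Rightarrow> 's \<Rightarrow> 'm) \<Rightarrow> bool" where
  "morita_module R S la ra \<longleftrightarrow>
     bimodule R S la ra \<and> left_mod_sim R UNIV la R ((*)) \<and> endr_eq R S la ra"

section \<open>Tensor product A \<otimes>_B N as quotient of the free abelian group\<close>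

definition zsmult :: "int \<Rightarrow> 'm::ab_group_add \<Rightarrow> 'm" where
  "zsmult k x = (if k \<ge> 0 then (\<Sum>_\<in>{..<nat k}. x) else - (\<Sum>_\<in>{..<nat (-k)}. x))"

inductive_set tensor_rel :: "'a::ring_1 set \<Rightarrow> ('a \<Rightarrow> 'n::ab_group_add \<Rightarrow> 'n) \<Rightarrow> ('a \<times> 'n \<Rightarrow>\<^sub>0 int) set"
  for B :: "'a set" and actN :: "'a \<Rightarrow> 'n \<Rightarrow> 'n" where
  rel_zero: "0 \<in> tensor_rel B actN"
| rel_addl: "Poly_Mapping.single (x + y, n) 1 - Poly_Mapping.single (x, n) 1
               - Poly_Mapping.single (y, n) 1 \<in> tensor_rel B actN"
| rel_addr: "Poly_Mapping.single (x, n + n') 1 - Poly_Mapping.single (x, n) 1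
               - Poly_Mapping.single (x, n') 1 \<in> tensor_rel B actN"
| rel_bal: "b \<in> B \<Longrightarrow> Poly_Mapping.single (x * b, n) 1 - Poly_Mapping.single (x, actN b n) 1
               \<in> tensor_rel B actN"
| rel_plus: "f \<in> tensor_rel B actN \<Longrightarrow> g \<in> tensor_rel B actN \<Longrightarrow> f + g \<in> tensor_rel B actN"
| rel_uminus: "f \<in> tensor_rel B actN \<Longrightarrow> - f \<in> tensor_rel B actN"

definition free_ext :: "('a \<Rightarrow> 'n \<Rightarrow> 'm::ab_group_add) \<Rightarrow> ('a \<times> 'n \<Rightarrow>\<^sub>0 int) \<Rightarrow> 'm" where
  "free_ext \<theta> f = (\<Sum>p\<in>Poly_Mapping.keys f. zsmult (Poly_Mapping.lookup f p) (\<theta> (fst p) (snd p)))"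

text \<open>{}_A A \<otimes>_B N_{B'} \<cong> {}_A M_{B'}: there is theta with x \<otimes> n |-> theta x n inducing an
  isomorphism of abelian groups (free group / relations) -> M, which is left A-linear
  and right B'-linear.\<close>

definition tensor_iso ::
  "'a::ring_1 set \<Rightarrow> 'b::ring_1 set \<Rightarrow> ('a \<Rightarrow> 'n::ab_group_add \<Rightarrow> 'n) \<Rightarrow> ('n \<Rightarrow> 'b \<Rightarrow> 'n)
   \<Rightarrow> ('a \<Rightarrow> 'm::ab_group_add \<Rightarrow> 'm) \<Rightarrow> ('m \<Rightarrow> 'b \<Rightarrow> 'm) \<Rightarrow> bool" where
  "tensor_iso B B' laN raN laM raM \<longleftrightarrow>
     (\<exists>\<theta> :: 'a \<Rightarrow> 'n \<Rightarrow> 'm.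
        surj (free_ext \<theta>) \<and>
        {f. free_ext \<theta> f = 0} = tensor_rel B laN \<and>
        (\<forall>a x n. \<theta> (a * x) n = laM a (\<theta> x n)) \<and>
        (\<forall>b'\<in>B'. \<forall>x n. \<theta> x (raN n b') = raM (\<theta> x n) b'))"

text \<open>Morita equivalence of ring extensions A/B (A = UNIV::'a set) and A'/B' (A' = UNIV::'c set),
  witnessed by the Morita modules {}_A M_{A'} (actions laM, raM) and {}_B N_{B'} (laN, raN).\<close>

definition morita_equiv_via ::
  "'a::ring_1 set \<Rightarrow> 'c::ring_1 set
   \<Rightarrow> ('a \<Rightarrow> 'm::ab_group_add \<Rightarrow> 'm) \<Rightarrow> ('m \<Rightarrow> 'c \<Rightarrow> 'm)
   \<Rightarrow> ('a \<Rightarrow> 'n::ab_group_add \<Rightarrow> 'n) \<Rightarrow> ('n \<Rightarrow> 'c \<Rightarrow> 'n) \<Rightarrow> bool" where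
  "morita_equiv_via B B' laM raM laN raN \<longleftrightarrow>
     morita_module (UNIV :: 'a set) (UNIV :: 'c set) laM raM \<and>
     morita_module B B' laN raN \<and>
     tensor_iso B B' laN raN laM raM"

end

theory Submission
  imports Defs HOL.Modules
begin

text \<open>
  Write M = A \<otimes>_B N, so that A' = End_A(M) and B' = End_B(N).
  Since B | N there are B-linear h_j : N \<rightarrow> B and m_j \<in> N with \<Sum> h_j(m_j) = 1.
  With G_j the A-linear form a \<otimes> n \<mapsto> a h_j(n) on M, the endomorphisms
  E_jl(a) : m \<mapsto> G_j(m) a \<otimes> m_l make a \<mapsto> (E_jl(a)) a multiplicative embedding of A into
  matrices over A' that maps B into matrices over B' and has an A-bilinear left inverse.
  So a B'-derivation D of A', applied entrywise, descends to a B-derivation of A, which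
  is inner, say [s, -]. Since N | B, N has a dual basis (f_i, n_i), and every element of A'
  is a sum of endomorphisms m \<mapsto> F_i(m) c \<otimes> n_q, on which D acts through its descent;
  this gives D = [s', -] with s' = \<Sum>_q (m \<mapsto> F_q(m) s \<otimes> n_q).
\<close>

lemma zsmult_0 [simp]: "zsmult 0 x = 0"
  by (simp add: zsmult_def)

lemma zsmult_1 [simp]: "zsmult 1 x = x"
  by (simp add: zsmult_def)

lemma zsmult_add_one: "zsmult (k + 1) x = zsmult k x + x"
proof (cases "k \<ge> 0")
  case True
  then have "nat (k + 1) = Suc (nat k)" by simp
  with True show ?thesis by (simp add: zsmult_def)
next
  case False
  then consider "k = -1" | "nat (- k) = Suc (nat (- (k + 1)))" "k < -1" by linarith
  then show ?thesis
    by cases (simp_all add: zsmult_def)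
qed

lemma zsmult_add: "zsmult (k + l) x = zsmult k x + zsmult l x"
proof (induction l rule: int_induct[where k = 0])
  case (step1 i)
  then show ?case
    using zsmult_add_one[of "k + i" x] zsmult_add_one[of i x] by (simp add: add.assoc)
next
  case (step2 i)
  then show ?case
    using zsmult_add_one[of "k + (i - 1)" x] zsmult_add_one[of "i - 1" x] by (simp add: algebra_simps)
qed simp

lemma free_ext_eq_sum:
  assumes "finite S" "Poly_Mapping.keys f \<subseteq> S"
  shows "free_ext \<theta> f = (\<Sum>p\<in>S. zsmult (Poly_Mapping.lookup f p) (\<theta> (fst p) (snd p)))"
  unfolding free_ext_def
  by (rule sum.mono_neutral_left) (use assms in \<open>auto simp: in_keys_iff\<close>)

lemma additive_free_ext: "additive (free_ext \<theta>)"
proof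
  fix f g :: "'a \<times> 'b \<Rightarrow>\<^sub>0 int"
  let ?S = "Poly_Mapping.keys f \<union> Poly_Mapping.keys g"
  have "free_ext \<theta> (f + g) = (\<Sum>p\<in>?S. zsmult (Poly_Mapping.lookup (f + g) p) (\<theta> (fst p) (snd p)))"
    by (rule free_ext_eq_sum) (auto dest: subsetD[OF keys_add])
  also have "\<dots> = (\<Sum>p\<in>?S. zsmult (Poly_Mapping.lookup f p) (\<theta> (fst p) (snd p)))
      + (\<Sum>p\<in>?S. zsmult (Poly_Mapping.lookup g p) (\<theta> (fst p) (snd p)))"
    by (simp add: lookup_add zsmult_add sum.distrib)
  also have "\<dots> = free_ext \<theta> f + free_ext \<theta> g"
    by (subst (1 2) free_ext_eq_sum[symmetric]) auto
  finally show "free_ext \<theta> (f + g) = free_ext \<theta> f + free_ext \<theta> g" .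
qed

lemmas free_ext_simps = additive.zero[OF additive_free_ext] additive.add[OF additive_free_ext]
  additive.minus[OF additive_free_ext] additive.diff[OF additive_free_ext]

lemma free_ext_frag_of [simp]: "free_ext \<theta> (frag_of p) = \<theta> (fst p) (snd p)"
  by (simp add: free_ext_def)

lemma free_ext_tensor_rel:
  assumes "\<And>x y n. \<phi> (x + y) n = \<phi> x n + \<phi> y n"
    and "\<And>x n n'. \<phi> x (n + n') = \<phi> x n + \<phi> x n'"
    and "\<And>b x n. b \<in> B \<Longrightarrow> \<phi> (x * b) n = \<phi> x (actN b n)"
    and "f \<in> tensor_rel B actN"
  shows "free_ext \<phi> f = 0"
  using assms(4) by induction (simp_all add: free_ext_simps assms(1-3))

section \<open>Direct summands of free modules\<close>

lemma dsum_carrier_sum: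
  assumes "0 \<in> CY" and "\<And>y z. y \<in> CY \<Longrightarrow> z \<in> CY \<Longrightarrow> y + z \<in> CY"
    and g_add: "\<forall>v\<in>dsum_carrier CY n. \<forall>w\<in>dsum_carrier CY n.
      g (\<lambda>i. v i + w i) = g v + (g w :: 'z::ab_group_add)"
    and "finite S" and "\<And>i. i \<in> S \<Longrightarrow> u i \<in> dsum_carrier CY n"
  shows "(\<lambda>j. \<Sum>i\<in>S. u i j) \<in> dsum_carrier CY n \<and>
    g (\<lambda>j. \<Sum>i\<in>S. u i j) = (\<Sum>i\<in>S. g (u i))"
  using \<open>finite S\<close> assms(5)
proof (induction S rule: finite_induct)
  case empty
  have zero: "(\<lambda>j. 0) \<in> dsum_carrier CY n"
    using assms(1) by (simp add: dsum_carrier_def)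
  with g_add have "g (\<lambda>j. 0) = g (\<lambda>j. 0) + g (\<lambda>j. 0)"
    by fastforce
  with zero show ?case by simp
next
  case (insert i S)
  then have "u i \<in> dsum_carrier CY n" and "(\<lambda>j. \<Sum>i\<in>S. u i j) \<in> dsum_carrier CY n"
    by auto
  with insert g_add assms(2) show ?case
    by (auto simp: dsum_carrier_def)
qed

definition dsum_single :: "nat \<Rightarrow> nat \<Rightarrow> 'y::zero \<Rightarrow> nat \<Rightarrow> 'y" where
  "dsum_single n i y = (\<lambda>j. if j = i \<and> j < n then y else 0)"

lemma dsum_single_carrier: "0 \<in> CY \<Longrightarrow> y \<in> CY \<Longrightarrow> dsum_single n i y \<in> dsum_carrier CY n"
  by (simp add: dsum_single_def dsum_carrier_def)

lemma dsum_single_add: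
  "dsum_single n i (y + z) = (\<lambda>j. dsum_single n i y j + dsum_single n i (z :: 'y::monoid_add) j)"
  by (auto simp: dsum_single_def)

lemma dsum_single_act: "act r 0 = 0 \<Longrightarrow> dsum_single n i (act r y) = dsum_act act r (dsum_single n i y)"
  by (auto simp: dsum_single_def dsum_act_def)

lemma sum_dsum_single:
  assumes "v \<in> dsum_carrier CY n"
  shows "(\<lambda>j. \<Sum>i<n. dsum_single n i (v i) j) = (v :: nat \<Rightarrow> 'y::comm_monoid_add)"
proof
  show "(\<Sum>i<n. dsum_single n i (v i) j) = v j" for j
    using assms by (cases "j < n") (auto simp: dsum_single_def dsum_carrier_def)
qed

text \<open>p_i and q_i are the i-th coordinate and coordinate embedding of Y^n.\<close>

lemma left_mod_dvd_decomp:
  assumes "left_mod_dvd R CX actX CY actY"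
    and "0 \<in> CY" and "\<And>y z. y \<in> CY \<Longrightarrow> z \<in> CY \<Longrightarrow> y + z \<in> CY"
    and "\<And>r. r \<in> R \<Longrightarrow> actY r 0 = 0"
  obtains n :: nat
    and p :: "nat \<Rightarrow> 'x::ab_group_add \<Rightarrow> 'y::ab_group_add" and q :: "nat \<Rightarrow> 'y \<Rightarrow> 'x" where
    "\<And>i x. x \<in> CX \<Longrightarrow> p i x \<in> CY"
    "\<And>i x y. x \<in> CX \<Longrightarrow> y \<in> CX \<Longrightarrow> p i (x + y) = p i x + p i y"
    "\<And>i r x. r \<in> R \<Longrightarrow> x \<in> CX \<Longrightarrow> p i (actX r x) = actY r (p i x)"
    "\<And>i y. y \<in> CY \<Longrightarrow> q i y \<in> CX"
    "\<And>i y z. y \<in> CY \<Longrightarrow> z \<in> CY \<Longrightarrow> q i (y + z) = q i y + q i z"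
    "\<And>i r y. r \<in> R \<Longrightarrow> y \<in> CY \<Longrightarrow> q i (actY r y) = actX r (q i y)"
    "\<And>x. x \<in> CX \<Longrightarrow> x = (\<Sum>i<n. q i (p i x))"
proof -
  obtain n and f :: "'x \<Rightarrow> nat \<Rightarrow> 'y" and g where
    f_carrier: "\<forall>x\<in>CX. f x \<in> dsum_carrier CY n" and
    g_carrier: "\<forall>v\<in>dsum_carrier CY n. g v \<in> CX" and
    f_add: "\<forall>x\<in>CX. \<forall>y\<in>CX. f (x + y) = (\<lambda>i. f x i + f y i)" and
    f_act: "\<forall>r\<in>R. \<forall>x\<in>CX. f (actX r x) = dsum_act actY r (f x)" and
    g_add: "\<forall>v\<in>dsum_carrier CY n. \<forall>w\<in>dsum_carrier CY n. g (\<lambda>i. v i + w i) = g v + g w" and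
    g_act: "\<forall>r\<in>R. \<forall>v\<in>dsum_carrier CY n. g (dsum_act actY r v) = actX r (g v)" and
    g_f: "\<forall>x\<in>CX. g (f x) = x"
    using assms(1) unfolding left_mod_dvd_def by blast
  note single_carrier = dsum_single_carrier[OF assms(2)]
  show ?thesis
  proof
    show "\<And>i x. x \<in> CX \<Longrightarrow> f x i \<in> CY"
      using f_carrier by (simp add: dsum_carrier_def)
    show "\<And>i x y. x \<in> CX \<Longrightarrow> y \<in> CX \<Longrightarrow> f (x + y) i = f x i + f y i"
      using f_add by simp
    show "\<And>i r x. r \<in> R \<Longrightarrow> x \<in> CX \<Longrightarrow> f (actX r x) i = actY r (f x i)"
      using f_act by (simp add: dsum_act_def)
    show "\<And>i y. y \<in> CY \<Longrightarrow> g (dsum_single n i y) \<in> CX"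
      using g_carrier single_carrier by blast
    show "\<And>i y z. y \<in> CY \<Longrightarrow> z \<in> CY \<Longrightarrow>
        g (dsum_single n i (y + z)) = g (dsum_single n i y) + g (dsum_single n i z)"
      using g_add single_carrier by (simp add: dsum_single_add)
    show "\<And>i r y. r \<in> R \<Longrightarrow> y \<in> CY \<Longrightarrow>
        g (dsum_single n i (actY r y)) = actX r (g (dsum_single n i y))"
      using g_act single_carrier assms(4) by (simp add: dsum_single_act)
    show "x = (\<Sum>i<n. g (dsum_single n i (f x i)))" if "x \<in> CX" for x
    proof -
      have "x = g (\<lambda>j. \<Sum>i<n. dsum_single n i (f x i) j)"
        using g_f f_carrier sum_dsum_single[of "f x" CY n] that by simp
      also have "\<dots> = (\<Sum>i<n. g (dsum_single n i (f x i)))"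
        using dsum_carrier_sum[OF assms(2,3) g_add, of "{..<n}" "\<lambda>i. dsum_single n i (f x i)"]
          single_carrier f_carrier that
        by (simp add: dsum_carrier_def)
      finally show ?thesis .
    qed
  qed
qed

section \<open>The tensor product A \<otimes>_B N\<close>

locale morita_tensor =
  fixes B :: "'a::ring_1 set" and B' :: "'c::ring_1 set"
    and laM :: "'a \<Rightarrow> 'm::ab_group_add \<Rightarrow> 'm" and raM :: "'m \<Rightarrow> 'c \<Rightarrow> 'm"
    and laN :: "'a \<Rightarrow> 'n::ab_group_add \<Rightarrow> 'n" and raN :: "'n \<Rightarrow> 'c \<Rightarrow> 'n"
    and \<theta> :: "'a \<Rightarrow> 'n \<Rightarrow> 'm"
  assumes subring_B: "is_subring B"
    and bimodule_M: "bimodule UNIV UNIV laM raM" and endr_M: "endr_eq UNIV UNIV laM raM"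
    and bimodule_N: "bimodule B B' laN raN" and endr_N: "endr_eq B B' laN raN"
    and N_sim_B: "left_mod_sim B UNIV laN B (*)"
    and surj_free_ext: "surj (free_ext \<theta>)"
    and kernel_free_ext: "{f. free_ext \<theta> f = 0} = tensor_rel B laN"
    and theta_mult_left: "\<And>a x n. \<theta> (a * x) n = laM a (\<theta> x n)"
    and theta_raN: "\<And>b' x n. b' \<in> B' \<Longrightarrow> \<theta> x (raN n b') = raM (\<theta> x n) b'"

lemma morita_equiv_viaE:
  assumes "is_subring B" and "morita_equiv_via B B' laM raM laN raN"
  obtains \<theta> where "morita_tensor B B' laM raM laN raN \<theta>"
  using assms unfolding morita_equiv_via_def morita_module_def tensor_iso_def morita_tensor_def
  by blast

context morita_tensor
begin

lemma one_in_B: "1 \<in> B"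
  using subring_B by (simp add: is_subring_def)

lemma zero_in_B: "0 \<in> B"
  using subring_B unfolding is_subring_def by (metis diff_self)

lemma add_in_B: "x \<in> B \<Longrightarrow> y \<in> B \<Longrightarrow> x + y \<in> B"
  using subring_B by (simp add: is_subring_def)

lemma mult_in_B: "x \<in> B \<Longrightarrow> y \<in> B \<Longrightarrow> x * y \<in> B"
  using subring_B by (simp add: is_subring_def)

lemma additive_laM: "additive (laM a)"
  using bimodule_M by unfold_locales (simp add: bimodule_def left_module_def)

lemma additive_laM_left: "additive (\<lambda>a. laM a m)"
  using bimodule_M by unfold_locales (simp add: bimodule_def left_module_def)

lemma additive_raM: "additive (\<lambda>m. raM m c)"
  using bimodule_M by unfold_locales (simp add: bimodule_def right_module_def)

lemma additive_raM_right: "additive (raM m)"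
  using bimodule_M by unfold_locales (simp add: bimodule_def right_module_def)

lemma laM_mult: "laM (a * a') m = laM a (laM a' m)"
  using bimodule_M by (simp add: bimodule_def left_module_def)

lemma laM_one [simp]: "laM 1 m = m"
  using bimodule_M by (simp add: bimodule_def left_module_def)

lemma raM_mult: "raM m (c * c') = raM (raM m c) c'"
  using bimodule_M by (simp add: bimodule_def right_module_def)

lemma raM_one [simp]: "raM m 1 = m"
  using bimodule_M by (simp add: bimodule_def right_module_def)

lemma raM_laM: "raM (laM a m) c = laM a (raM m c)"
  using bimodule_M by (simp add: bimodule_def)

lemmas laM_simps [simp] = additive.add[OF additive_laM] additive.add[OF additive_laM_left]
  additive.diff[OF additive_laM] additive.diff[OF additive_laM_left]
  additive.zero[OF additive_laM] additive.zero[OF additive_laM_left]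
  additive.sum[OF additive_laM] additive.sum[OF additive_laM_left]

lemmas raM_simps [simp] = additive.add[OF additive_raM] additive.add[OF additive_raM_right]
  additive.diff[OF additive_raM] additive.diff[OF additive_raM_right]
  additive.zero[OF additive_raM] additive.zero[OF additive_raM_right]
  additive.sum[OF additive_raM] additive.sum[OF additive_raM_right]

lemma laN_add: "b \<in> B \<Longrightarrow> laN b (n + n') = laN b n + laN b n'"
  using bimodule_N by (simp add: bimodule_def left_module_def)

lemma laN_add_left: "b \<in> B \<Longrightarrow> b' \<in> B \<Longrightarrow> laN (b + b') n = laN b n + laN b' n"
  using bimodule_N by (simp add: bimodule_def left_module_def)

lemma laN_mult: "b \<in> B \<Longrightarrow> b' \<in> B \<Longrightarrow> laN (b * b') n = laN b (laN b' n)"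
  using bimodule_N by (simp add: bimodule_def left_module_def)

lemma laN_zero: "b \<in> B \<Longrightarrow> laN b 0 = 0"
  using additive.zero[of "laN b"] laN_add by (simp add: additive_def)

lemma free_ext_theta_eq_0_iff: "free_ext \<theta> r = 0 \<longleftrightarrow> r \<in> tensor_rel B laN"
  using kernel_free_ext by blast

lemma free_ext_theta_rel: "r \<in> tensor_rel B laN \<Longrightarrow> free_ext \<theta> r = 0"
  by (simp add: free_ext_theta_eq_0_iff)

lemma additive_theta_left: "additive (\<lambda>x. \<theta> x n)"
  by unfold_locales
    (use free_ext_theta_rel[OF tensor_rel.rel_addl] in \<open>simp add: free_ext_simps diff_diff_eq\<close>)

lemma additive_theta_right: "additive (\<theta> x)"
  by unfold_locales
    (use free_ext_theta_rel[OF tensor_rel.rel_addr] in \<open>simp add: free_ext_simps diff_diff_eq\<close>)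

lemma theta_balanced: "b \<in> B \<Longrightarrow> \<theta> (x * b) n = \<theta> x (laN b n)"
  using free_ext_theta_rel[OF tensor_rel.rel_bal] by (simp add: free_ext_simps)

lemma theta_eq_laM: "\<theta> a n = laM a (\<theta> 1 n)"
  using theta_mult_left[of a 1 n] by simp

lemmas theta_simps = additive.add[OF additive_theta_left] additive.add[OF additive_theta_right]
  additive.diff[OF additive_theta_left] additive.diff[OF additive_theta_right]
  additive.sum[OF additive_theta_left] additive.sum[OF additive_theta_right]

lemma tensor_induct [case_names zero tensor diff]:
  assumes "P 0" and "\<And>x n. P (\<theta> x n)" and "\<And>u v. P u \<Longrightarrow> P v \<Longrightarrow> P (u - v)"
  shows "P m"
proof -
  obtain g where "m = free_ext \<theta> g"
    using surj_free_ext by (metis surjD)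
  moreover have "P (free_ext \<theta> g)"
    by (induction g rule: frag_induction[OF subset_UNIV])
      (simp_all add: assms free_ext_simps split_beta)
  ultimately show ?thesis by simp
qed

definition balanced :: "('a \<Rightarrow> 'n \<Rightarrow> 'r::ab_group_add) \<Rightarrow> bool" where
  "balanced \<phi> \<longleftrightarrow> (\<forall>x y n. \<phi> (x + y) n = \<phi> x n + \<phi> y n) \<and>
     (\<forall>x n n'. \<phi> x (n + n') = \<phi> x n + \<phi> x n') \<and>
     (\<forall>b\<in>B. \<forall>x n. \<phi> (x * b) n = \<phi> x (laN b n))"

definition tensor_lift :: "('a \<Rightarrow> 'n \<Rightarrow> 'r::ab_group_add) \<Rightarrow> 'm \<Rightarrow> 'r" where
  "tensor_lift \<phi> m = free_ext \<phi> (SOME g. free_ext \<theta> g = m)"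

lemma tensor_lift_free_ext:
  assumes "balanced \<phi>"
  shows "tensor_lift \<phi> (free_ext \<theta> g) = free_ext \<phi> g"
proof -
  let ?g = "SOME g'. free_ext \<theta> g' = free_ext \<theta> g"
  have "free_ext \<theta> ?g = free_ext \<theta> g"
    by (rule someI) (rule refl)
  then have "g - ?g \<in> tensor_rel B laN"
    by (simp flip: free_ext_theta_eq_0_iff add: free_ext_simps)
  then have "free_ext \<phi> (g - ?g) = 0"
    by (rule free_ext_tensor_rel[rotated 3]) (use assms in \<open>auto simp: balanced_def\<close>)
  then show ?thesis
    unfolding tensor_lift_def by (simp add: free_ext_simps)
qed

lemma tensor_lift_theta [simp]: "balanced \<phi> \<Longrightarrow> tensor_lift \<phi> (\<theta> x n) = \<phi> x n"
  using tensor_lift_free_ext[of \<phi> "frag_of (x, n)"] by simp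

lemma additive_tensor_lift: "balanced \<phi> \<Longrightarrow> additive (tensor_lift \<phi>)"
proof
  fix u v
  assume "balanced \<phi>"
  moreover obtain g h where "u = free_ext \<theta> g" "v = free_ext \<theta> h"
    using surj_free_ext by (metis surjD)
  ultimately show "tensor_lift \<phi> (u + v) = tensor_lift \<phi> u + tensor_lift \<phi> v"
    using tensor_lift_free_ext[of \<phi> "g + h"] by (simp add: tensor_lift_free_ext free_ext_simps)
qed

definition N_dual :: "('n \<Rightarrow> 'a) \<Rightarrow> bool" where
  "N_dual f \<longleftrightarrow> (\<forall>n n'. f (n + n') = f n + f n') \<and>
     (\<forall>b\<in>B. \<forall>n. f (laN b n) = b * f n) \<and> (\<forall>n. f n \<in> B)"

definition M_dual :: "('m \<Rightarrow> 'a) \<Rightarrow> bool" where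
  "M_dual F \<longleftrightarrow> additive F \<and> (\<forall>a m. F (laM a m) = a * F m)"

lemma M_dual_additive: "M_dual F \<Longrightarrow> additive F"
  by (simp add: M_dual_def)

lemma M_dual_laM: "M_dual F \<Longrightarrow> F (laM a m) = a * F m"
  by (simp add: M_dual_def)

definition lift_form :: "('n \<Rightarrow> 'a) \<Rightarrow> 'm \<Rightarrow> 'a" where
  "lift_form f = tensor_lift (\<lambda>x n. x * f n)"

lemma balanced_mult_form: "N_dual f \<Longrightarrow> balanced (\<lambda>x n. x * f n)"
  by (simp add: N_dual_def balanced_def distrib_left distrib_right mult.assoc)

lemma lift_form_theta [simp]: "N_dual f \<Longrightarrow> lift_form f (\<theta> x n) = x * f n"
  by (simp add: lift_form_def balanced_mult_form)

lemma M_dual_lift_form: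
  assumes "N_dual f"
  shows "M_dual (lift_form f)"
proof -
  have lift_additive: "additive (lift_form f)"
    unfolding lift_form_def using assms by (intro additive_tensor_lift balanced_mult_form)
  have "lift_form f (laM a m) = a * lift_form f m" for a m
  proof (induction m rule: tensor_induct)
    case zero
    show ?case by (simp add: additive.zero[OF lift_additive])
  next
    case (tensor x n)
    show ?case using assms by (simp add: theta_mult_left[symmetric] mult.assoc)
  next
    case (diff u v)
    then show ?case by (simp add: additive.diff[OF lift_additive] right_diff_distrib)
  qed
  with lift_additive show ?thesis
    by (simp add: M_dual_def)
qed

lemma raM_cancel: "(\<And>m. raM m c = raM m c') \<Longrightarrow> c = c'"
proof -
  assume "\<And>m. raM m c = raM m c'"
  moreover have "left_linear UNIV laM laM (\<lambda>m. raM m c)"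
    by (simp add: left_linear_def raM_laM)
  ultimately show "c = c'"
    using endr_M unfolding endr_eq_def by blast
qed

definition endo_of :: "('m \<Rightarrow> 'm) \<Rightarrow> 'c" where
  "endo_of \<phi> = (THE c. \<forall>m. \<phi> m = raM m c)"

lemma raM_endo_of:
  assumes "left_linear UNIV laM laM \<phi>"
  shows "raM m (endo_of \<phi>) = \<phi> m"
proof -
  have "\<exists>!c. \<forall>m. \<phi> m = raM m c"
    using endr_M assms unfolding endr_eq_def by auto
  then have "\<forall>m. \<phi> m = raM m (endo_of \<phi>)"
    unfolding endo_of_def by (rule theI')
  then show ?thesis by simp
qed

definition rank_one :: "('m \<Rightarrow> 'a) \<Rightarrow> 'a \<Rightarrow> 'n \<Rightarrow> 'c" where
  "rank_one F a n = endo_of (\<lambda>m. \<theta> (F m * a) n)"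

lemma raM_rank_one:
  assumes "M_dual F"
  shows "raM m (rank_one F a n) = \<theta> (F m * a) n"
  unfolding rank_one_def
proof (rule raM_endo_of)
  show "left_linear UNIV laM laM (\<lambda>m. \<theta> (F m * a) n)"
    using assms
    by (simp add: left_linear_def M_dual_laM additive.add[OF M_dual_additive] distrib_right
        theta_simps mult.assoc theta_mult_left laM_mult)
qed

lemma additive_rank_one: "M_dual F \<Longrightarrow> additive (\<lambda>a. rank_one F a n)"
  by unfold_locales (rule raM_cancel, simp add: raM_rank_one distrib_left theta_simps)

text \<open>For b \<in> B the endomorphism comes from the B-endomorphism n' \<mapsto> f(n') b n of N,
  and End(N) = B'.\<close>

lemma rank_one_in_B':
  assumes f: "N_dual f" and b: "b \<in> B"
  shows "rank_one (lift_form f) b n \<in> B'"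
proof -
  let ?\<psi> = "\<lambda>n'. laN (f n' * b) n"
  have f_B: "f n' \<in> B" for n'
    using f by (simp add: N_dual_def)
  have "left_linear B laN laN ?\<psi>"
    using f f_B b
    by (simp add: left_linear_def N_dual_def distrib_right laN_add_left laN_mult mult_in_B mult.assoc)
  then obtain b' where b': "b' \<in> B'" "\<And>n'. ?\<psi> n' = raN n' b'"
    using endr_N unfolding endr_eq_def by blast
  have "raM m b' = \<theta> (lift_form f m * b) n" for m
  proof (induction m rule: tensor_induct)
    case zero
    show ?case
      using additive.zero[OF M_dual_additive[OF M_dual_lift_form[OF f]]] theta_eq_laM[of 0 n]
      by simp
  next
    case (tensor x n')
    have "raM (\<theta> x n') b' = \<theta> x (laN (f n' * b) n)"
      using b' theta_raN by simp
    also have "\<dots> = \<theta> (x * (f n' * b)) n"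
      using f_B b by (simp add: theta_balanced mult_in_B)
    finally show ?case
      using f by (simp add: mult.assoc)
  next
    case (diff u v)
    then show ?case
      using f by (simp add: additive.diff[OF M_dual_additive[OF M_dual_lift_form]] left_diff_distrib
          theta_simps)
  qed
  then have "b' = rank_one (lift_form f) b n"
    by (intro raM_cancel) (simp add: raM_rank_one M_dual_lift_form f)
  with b' show ?thesis by simp
qed

lemma dual_basis_exists:
  obtains k :: nat and fi :: "nat \<Rightarrow> 'n \<Rightarrow> 'a" and ni :: "nat \<Rightarrow> 'n" where
    "\<And>i. N_dual (fi i)" and "\<And>n. n = (\<Sum>i<k. laN (fi i n) (ni i))"
proof -
  have "left_mod_dvd B UNIV laN B (*)"
    using N_sim_B by (simp add: left_mod_sim_def)
  then obtain k and p :: "nat \<Rightarrow> 'n \<Rightarrow> 'a" and q where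
    p: "\<And>i x. p i x \<in> B" "\<And>i x y. p i (x + y) = p i x + p i y"
      "\<And>i r x. r \<in> B \<Longrightarrow> p i (laN r x) = r * p i x" and
    q: "\<And>i r y. r \<in> B \<Longrightarrow> y \<in> B \<Longrightarrow> q i (r * y) = laN r (q i y)" and
    decomp: "\<And>x. x = (\<Sum>i<k. q i (p i x))"
    by (rule left_mod_dvd_decomp) (auto simp: zero_in_B add_in_B)
  show ?thesis
  proof
    show "N_dual (p i)" for i
      using p by (simp add: N_dual_def)
    show "x = (\<Sum>i<k. laN (p i x) (q i 1))" for x
      using decomp[of x] q[of "p i x" 1 i for i] p(1) one_in_B by simp
  qed
qed

lemma generator_exists:
  obtains K :: nat and hj :: "nat \<Rightarrow> 'n \<Rightarrow> 'a" and mj :: "nat \<Rightarrow> 'n" where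
    "\<And>j. N_dual (hj j)" and "(\<Sum>j<K. hj j (mj j)) = 1"
proof -
  have "left_mod_dvd B B (*) UNIV laN"
    using N_sim_B by (simp add: left_mod_sim_def)
  then obtain K and p :: "nat \<Rightarrow> 'a \<Rightarrow> 'n" and q where
    q: "\<And>j y. q j y \<in> B" "\<And>j y z. q j (y + z) = q j y + q j z"
      "\<And>j r y. r \<in> B \<Longrightarrow> q j (laN r y) = r * q j y" and
    decomp: "\<And>x. x \<in> B \<Longrightarrow> x = (\<Sum>j<K. q j (p j x))"
    by (rule left_mod_dvd_decomp) (auto simp: laN_zero)
  show ?thesis
  proof
    show "N_dual (q j)" for j
      using q by (simp add: N_dual_def)
    show "(\<Sum>j<K. q j (p j 1)) = 1"
      using decomp one_in_B by simp
  qed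
qed

end

section \<open>Transfer of derivations\<close>

lemma is_B_derivation_additive: "is_B_derivation B D \<Longrightarrow> additive D"
  by unfold_locales (simp add: is_B_derivation_def)

lemma is_B_derivation_mult_B:
  "is_B_derivation B D \<Longrightarrow> p \<in> B \<Longrightarrow> q \<in> B \<Longrightarrow> D (p * x * q) = p * D x * q"
  by (simp add: is_B_derivation_def)

locale morita_bases = morita_tensor B B' laM raM laN raN \<theta>
  for B :: "'a::ring_1 set" and B' :: "'c::ring_1 set"
    and laM :: "'a \<Rightarrow> 'm::ab_group_add \<Rightarrow> 'm" and raM :: "'m \<Rightarrow> 'c \<Rightarrow> 'm"
    and laN :: "'a \<Rightarrow> 'n::ab_group_add \<Rightarrow> 'n" and raN :: "'n \<Rightarrow> 'c \<Rightarrow> 'n"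
    and \<theta> :: "'a \<Rightarrow> 'n \<Rightarrow> 'm" +
  fixes k :: nat and fi :: "nat \<Rightarrow> 'n \<Rightarrow> 'a" and ni :: "nat \<Rightarrow> 'n"
    and K :: nat and hj :: "nat \<Rightarrow> 'n \<Rightarrow> 'a" and mj :: "nat \<Rightarrow> 'n"
  assumes N_dual_fi: "\<And>i. N_dual (fi i)" and dual_basis: "\<And>n. n = (\<Sum>i<k. laN (fi i n) (ni i))"
    and N_dual_hj: "\<And>j. N_dual (hj j)" and generator: "(\<Sum>j<K. hj j (mj j)) = 1"
begin

abbreviation "F i \<equiv> lift_form (fi i)"
abbreviation "G j \<equiv> lift_form (hj j)"

definition v :: "nat \<Rightarrow> 'm" where "v i = \<theta> 1 (ni i)"
definition w :: "nat \<Rightarrow> 'm" where "w j = \<theta> 1 (mj j)"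

lemma M_dual_F: "M_dual (F i)"
  by (rule M_dual_lift_form[OF N_dual_fi])

lemma M_dual_G: "M_dual (G j)"
  by (rule M_dual_lift_form[OF N_dual_hj])

lemmas G_simps [simp] = additive.add[OF M_dual_additive[OF M_dual_G]]
  additive.sum[OF M_dual_additive[OF M_dual_G]] additive.zero[OF M_dual_additive[OF M_dual_G]]
  M_dual_laM[OF M_dual_G]

lemma G_w [simp]: "G l (w j) = hj l (mj j)"
  by (simp add: w_def N_dual_hj)

lemma theta_mj: "\<theta> a (mj j) = laM a (w j)"
  unfolding w_def by (rule theta_eq_laM)

lemma theta_ni: "\<theta> a (ni i) = laM a (v i)"
  unfolding v_def by (rule theta_eq_laM)

lemma sum_generator_left: "(\<Sum>l<K. c * hj l (mj l)) = c"
  by (simp add: sum_distrib_left[symmetric] generator)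

lemma sum_generator_right: "(\<Sum>l<K. hj l (mj l) * c) = c"
  by (simp add: sum_distrib_right[symmetric] generator)

lemma dual_basis_M: "m = (\<Sum>i<k. laM (F i m) (v i))"
proof (induction m rule: tensor_induct)
  case zero
  show ?case by (simp add: additive.zero[OF M_dual_additive[OF M_dual_F]])
next
  case (tensor x n)
  have "(\<Sum>i<k. laM (F i (\<theta> x n)) (v i)) = (\<Sum>i<k. \<theta> x (laN (fi i n) (ni i)))"
    using N_dual_fi by (simp add: theta_ni[symmetric] theta_balanced N_dual_def)
  also have "\<dots> = \<theta> x n"
    by (simp add: additive.sum[OF additive_theta_right, symmetric] dual_basis[symmetric])
  finally show ?case by simp
next
  case (diff m m')
  then show ?case
    by (simp add: additive.diff[OF M_dual_additive[OF M_dual_F]] sum_subtractf)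
qed

definition rep :: "'a \<Rightarrow> nat \<Rightarrow> nat \<Rightarrow> 'c" where
  "rep a j l = rank_one (G j) a (mj l)"

definition unrep :: "(nat \<Rightarrow> nat \<Rightarrow> 'c) \<Rightarrow> 'a" where
  "unrep X = (\<Sum>j<K. \<Sum>l<K. G l (raM (w j) (X j l)))"

lemma raM_rep: "raM m (rep a j l) = \<theta> (G j m * a) (mj l)"
  by (simp add: rep_def raM_rank_one M_dual_G)

lemma rep_mult: "rep (a * b) j l = (\<Sum>p<K. rep a j p * rep b p l)"
proof (rule raM_cancel)
  fix m
  have "raM m (\<Sum>p<K. rep a j p * rep b p l) = \<theta> (\<Sum>p<K. G j m * a * hj p (mj p) * b) (mj l)"
    by (simp add: raM_mult raM_rep theta_simps N_dual_hj mult.assoc)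
  also have "(\<Sum>p<K. G j m * a * hj p (mj p) * b) = G j m * a * b"
    by (simp add: sum_distrib_right[symmetric] sum_generator_left)
  finally show "raM m (rep (a * b) j l) = raM m (\<Sum>p<K. rep a j p * rep b p l)"
    by (simp add: raM_rep mult.assoc)
qed

lemma rep_add: "rep (a + b) j l = rep a j l + rep b j l"
  unfolding rep_def by (rule additive.add[OF additive_rank_one[OF M_dual_G]])

lemma rep_in_B': "b \<in> B \<Longrightarrow> rep b j l \<in> B'"
  unfolding rep_def by (rule rank_one_in_B'[OF N_dual_hj])

lemma unrep_add: "unrep (\<lambda>j l. X j l + Y j l) = unrep X + unrep Y"
  by (simp add: unrep_def sum.distrib)

lemma unrep_mult_rep: "unrep (\<lambda>j l. \<Sum>p<K. X j p * rep b p l) = unrep X * b"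
proof -
  have "unrep (\<lambda>j l. \<Sum>p<K. X j p * rep b p l)
      = (\<Sum>j<K. \<Sum>l<K. \<Sum>p<K. G p (raM (w j) (X j p)) * b * hj l (mj l))"
    by (simp add: unrep_def raM_mult raM_rep N_dual_hj)
  also have "\<dots> = (\<Sum>j<K. \<Sum>p<K. G p (raM (w j) (X j p)) * b)"
    by (subst sum.swap) (simp add: sum_generator_left)
  also have "\<dots> = unrep X * b"
    by (simp add: unrep_def sum_distrib_right)
  finally show ?thesis .
qed

lemma unrep_rep_mult: "unrep (\<lambda>j l. \<Sum>p<K. rep a j p * Y p l) = a * unrep Y"
proof -
  have "unrep (\<lambda>j l. \<Sum>p<K. rep a j p * Y p l)
      = (\<Sum>j<K. \<Sum>l<K. \<Sum>p<K. hj j (mj j) * (a * G l (raM (w p) (Y p l))))"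
    by (simp add: unrep_def raM_mult raM_rep theta_mj raM_laM mult.assoc)
  also have "\<dots> = (\<Sum>j<K. hj j (mj j) * (a * (\<Sum>l<K. \<Sum>p<K. G l (raM (w p) (Y p l)))))"
    by (simp add: sum_distrib_left)
  also have "\<dots> = (\<Sum>j<K. hj j (mj j) * (a * unrep Y))"
    unfolding unrep_def by (subst sum.swap) (rule refl)
  also have "\<dots> = a * unrep Y"
    by (rule sum_generator_right)
  finally show ?thesis .
qed

lemma unrep_rep: "unrep (rep a) = a"
  by (simp add: unrep_def raM_rep N_dual_hj sum_generator_left sum_generator_right)

lemma rank_one_unrep:
  assumes "M_dual H"
  shows "(\<Sum>j<K. \<Sum>l<K. rank_one H 1 (mj j) * X j l * rank_one (G l) 1 n) = rank_one H (unrep X) n"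
proof (rule raM_cancel)
  fix m
  have "raM m (\<Sum>j<K. \<Sum>l<K. rank_one H 1 (mj j) * X j l * rank_one (G l) 1 n)
      = \<theta> (\<Sum>j<K. \<Sum>l<K. H m * G l (raM (w j) (X j l))) n"
    using assms by (simp add: raM_mult raM_rank_one M_dual_G theta_mj raM_laM theta_simps theta_mult_left)
  also have "\<dots> = raM m (rank_one H (unrep X) n)"
    using assms by (simp add: raM_rank_one unrep_def sum_distrib_left)
  finally show "raM m (\<Sum>j<K. \<Sum>l<K. rank_one H 1 (mj j) * X j l * rank_one (G l) 1 n)
      = raM m (rank_one H (unrep X) n)" .
qed

definition descend :: "('c \<Rightarrow> 'c) \<Rightarrow> 'a \<Rightarrow> 'a" where
  "descend D a = unrep (\<lambda>j l. D (rep a j l))"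

lemma is_B_derivation_descend:
  assumes D: "is_B_derivation B' D"
  shows "is_B_derivation B (descend D)"
proof -
  have D_mult: "D (x * y) = D x * y + x * D y" for x y
    using D by (simp add: is_B_derivation_def)
  have "descend D (a * b) = descend D a * b + a * descend D b" for a b
  proof -
    have "descend D (a * b)
        = unrep (\<lambda>j l. (\<Sum>p<K. D (rep a j p) * rep b p l) + (\<Sum>p<K. rep a j p * D (rep b p l)))"
      by (simp add: descend_def rep_mult additive.sum[OF is_B_derivation_additive[OF D]] D_mult
          sum.distrib)
    then show ?thesis
      by (simp add: unrep_add unrep_mult_rep unrep_rep_mult descend_def)
  qed
  moreover have "descend D (a + b) = descend D a + descend D b" for a b
    by (simp add: descend_def rep_add additive.add[OF is_B_derivation_additive[OF D]] unrep_add)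
  moreover have "descend D b = 0" if "b \<in> B" for b
    using D that by (simp add: descend_def is_B_derivation_def rep_in_B' unrep_def)
  ultimately show ?thesis
    by (simp add: is_B_derivation_def)
qed

lemma rank_one_descend:
  assumes D: "is_B_derivation B' D" and f: "N_dual f"
  shows "D (rank_one (lift_form f) a n) = rank_one (lift_form f) (descend D a) n"
proof -
  let ?H = "lift_form f"
  have "D (rank_one ?H a n)
      = D (\<Sum>j<K. \<Sum>l<K. rank_one ?H 1 (mj j) * rep a j l * rank_one (G l) 1 n)"
    by (simp add: rank_one_unrep M_dual_lift_form f unrep_rep)
  also have "\<dots> = (\<Sum>j<K. \<Sum>l<K. rank_one ?H 1 (mj j) * D (rep a j l) * rank_one (G l) 1 n)"
    by (simp add: additive.sum[OF is_B_derivation_additive[OF D]] is_B_derivation_mult_B[OF D]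
        rank_one_in_B' f N_dual_hj one_in_B)
  also have "\<dots> = rank_one ?H (descend D a) n"
    by (simp add: rank_one_unrep M_dual_lift_form f descend_def)
  finally show ?thesis .
qed

definition coord :: "'c \<Rightarrow> nat \<Rightarrow> nat \<Rightarrow> 'a" where
  "coord x i q = F q (raM (v i) x)"

lemma raM_dual_basis: "raM m x = (\<Sum>i<k. laM (F i m) (raM (v i) x))"
  using arg_cong[OF dual_basis_M[of m], of "\<lambda>u. raM u x"] by (simp add: raM_laM)

lemma sum_F_coord: "(\<Sum>i<k. F i m * coord x i q) = F q (raM m x)"
  by (simp add: raM_dual_basis[of m x] coord_def additive.sum[OF M_dual_additive[OF M_dual_F]]
      M_dual_laM[OF M_dual_F])

lemma sum_rank_one_one: "(\<Sum>q<k. rank_one (F q) 1 (ni q)) = 1"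
  by (rule raM_cancel) (simp add: raM_rank_one M_dual_F theta_ni flip: dual_basis_M)

lemma sum_rank_one_mult:
  "(\<Sum>q<k. rank_one (F q) s (ni q)) * x = (\<Sum>i<k. \<Sum>q<k. rank_one (F i) (s * coord x i q) (ni q))"
proof (rule raM_cancel)
  fix m
  have "raM m (\<Sum>i<k. \<Sum>q<k. rank_one (F i) (s * coord x i q) (ni q))
      = (\<Sum>i<k. laM (F i m * s) (\<Sum>q<k. laM (coord x i q) (v q)))"
    by (simp add: raM_rank_one M_dual_F theta_ni laM_mult)
  also have "\<dots> = (\<Sum>i<k. laM (F i m * s) (raM (v i) x))"
    by (simp only: coord_def flip: dual_basis_M)
  also have "\<dots> = raM m ((\<Sum>q<k. rank_one (F q) s (ni q)) * x)"
    by (simp add: raM_mult raM_rank_one M_dual_F theta_ni raM_laM)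
  finally show "raM m ((\<Sum>q<k. rank_one (F q) s (ni q)) * x)
      = raM m (\<Sum>i<k. \<Sum>q<k. rank_one (F i) (s * coord x i q) (ni q))" ..
qed

lemma mult_sum_rank_one:
  "x * (\<Sum>q<k. rank_one (F q) s (ni q)) = (\<Sum>i<k. \<Sum>q<k. rank_one (F i) (coord x i q * s) (ni q))"
proof (rule raM_cancel)
  fix m
  have "raM m (\<Sum>i<k. \<Sum>q<k. rank_one (F i) (coord x i q * s) (ni q))
      = (\<Sum>i<k. \<Sum>q<k. \<theta> (F i m * coord x i q * s) (ni q))"
    by (simp add: raM_rank_one M_dual_F mult.assoc)
  also have "\<dots> = (\<Sum>q<k. \<Sum>i<k. \<theta> (F i m * coord x i q * s) (ni q))"
    by (rule sum.swap)
  also have "\<dots> = (\<Sum>q<k. \<theta> ((\<Sum>i<k. F i m * coord x i q) * s) (ni q))"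
    by (simp add: theta_simps sum_distrib_right)
  also have "\<dots> = raM m (x * (\<Sum>q<k. rank_one (F q) s (ni q)))"
    by (simp add: sum_F_coord raM_mult raM_rank_one M_dual_F)
  finally show "raM m (x * (\<Sum>q<k. rank_one (F q) s (ni q)))
      = raM m (\<Sum>i<k. \<Sum>q<k. rank_one (F i) (coord x i q * s) (ni q))" ..
qed

lemma inner_derivation_ascend:
  assumes D: "is_B_derivation B' D" and s: "\<And>a. descend D a = s * a - a * s"
  shows "D x = (\<Sum>q<k. rank_one (F q) s (ni q)) * x - x * (\<Sum>q<k. rank_one (F q) s (ni q))"
proof -
  have "x = (\<Sum>i<k. \<Sum>q<k. rank_one (F i) (coord x i q) (ni q))"
    using sum_rank_one_mult[of 1 x] by (simp add: sum_rank_one_one)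
  then have "D x = D (\<Sum>i<k. \<Sum>q<k. rank_one (F i) (coord x i q) (ni q))"
    by (rule arg_cong)
  also have "\<dots> = (\<Sum>i<k. \<Sum>q<k. rank_one (F i) (descend D (coord x i q)) (ni q))"
    by (simp add: additive.sum[OF is_B_derivation_additive[OF D]] rank_one_descend[OF D N_dual_fi])
  also have "\<dots> = (\<Sum>i<k. \<Sum>q<k. rank_one (F i) (s * coord x i q) (ni q)
      - rank_one (F i) (coord x i q * s) (ni q))"
    by (simp add: s additive.diff[OF additive_rank_one[OF M_dual_F]])
  finally show ?thesis
    by (simp add: sum_subtractf sum_rank_one_mult mult_sum_rank_one)
qed

end

theorem theorem3p5:
  fixes B :: "'a::ring_1 set" and B' :: "'c::ring_1 set"
    and laM :: "'a \<Rightarrow> 'm::ab_group_add \<Rightarrow> 'm" and raM :: "'m \<Rightarrow> 'c \<Rightarrow> 'm"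
    and laN :: "'a \<Rightarrow> 'n::ab_group_add \<Rightarrow> 'n" and raN :: "'n \<Rightarrow> 'c \<Rightarrow> 'n"
  assumes "is_subring B" and "is_subring B'"
    and "weakly_separable B"
    and "morita_equiv_via B B' laM raM laN raN"
  shows "weakly_separable B'"
proof -
  obtain \<theta> where tensor: "morita_tensor B B' laM raM laN raN \<theta>"
    using assms(1,4) by (rule morita_equiv_viaE)
  then interpret morita_tensor B B' laM raM laN raN \<theta> .
  obtain k :: nat and fi ni where "\<And>i. N_dual (fi i)" "\<And>n. n = (\<Sum>i<k. laN (fi i n) (ni i))"
    by (rule dual_basis_exists) blast
  moreover obtain K :: nat and hj mj where "\<And>j. N_dual (hj j)" "(\<Sum>j<K. hj j (mj j)) = 1"
    by (rule generator_exists) blast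
  ultimately interpret morita_bases B B' laM raM laN raN \<theta> k fi ni K hj mj
    using tensor by (intro morita_bases.intro morita_bases_axioms.intro)
  show ?thesis
    unfolding weakly_separable_def
  proof (intro allI impI)
    fix D
    assume D: "is_B_derivation B' D"
    then obtain s where "\<And>a. descend D a = s * a - a * s"
      using assms(3) is_B_derivation_descend
      unfolding weakly_separable_def is_inner_derivation_def by blast
    then show "is_inner_derivation D"
      unfolding is_inner_derivation_def using inner_derivation_ascend[OF D] by blast
  qed
qed

end
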